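(* Let $E$ be a normed space over $\mathbb K$. Let $\ell^\infty(E)$ be the space of bounded sequences $(f_n)_{n\in\mathbb N}$ in $E$ with the norm $\|(f_n)\|=\sup_n\|f_n\|$, and $c_0(E)=\{(f_n)\in\ell^\infty(E): \|f_n\|\to0\}$. Then (1) $c_0(E)$ is a closed linear subspace of $\ell^\infty(E)$, so $\ell^\infty(E)/c_0(E)$ with the quotient norm is a normed space over $\mathbb K$; (2) $\ell^\infty(E)/c_0(E)$ is spherically complete; (3) the diagonal map $E\to\ell^\infty(E)/c_0(E)$, $x\mapsto[(x,x,x,\dots)]$, is a linear isometry. In particular every normed space over $\mathbb K$ embeds linearly isometrically into a spherically complete normed space over $\mathbb K$.
   Context: $\mathbb K$: nontrivially normed field with ultrametric absolute value; normed space over $\mathbb K$: normed vector space with $\|x+y\|\le\max(\|x\|,\|y\|)$. Spherically complete: every decreasing sequence of closed balls (radii $\ge0$) has nonempty intersection. *)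

theory Defs
  imports Complex_Main
begin

definition nonarch_abs_field :: "('k::field \<Rightarrow> real) \<Rightarrow> bool" where
  "nonarch_abs_field av \<longleftrightarrow>
     (\<forall>x. av x \<ge> 0) \<and> (\<forall>x. av x = 0 \<longleftrightarrow> x = 0) \<and>
     (\<forall>x y. av (x * y) = av x * av y) \<and>
     (\<forall>x y. av (x + y) \<le> max (av x) (av y)) \<and>
     (\<exists>x. av x \<noteq> 0 \<and> av x \<noteq> 1)"

record ('k, 'v) nspace =
  ns_carrier :: "'v set"
  ns_zero :: "'v"
  ns_add :: "'v \<Rightarrow> 'v \<Rightarrow> 'v"
  ns_smul :: "'k \<Rightarrow> 'v \<Rightarrow> 'v"
  ns_norm :: "'v \<Rightarrow> real"

definition ns_sub :: "('k::field, 'v) nspace \<Rightarrow> 'v \<Rightarrow> 'v \<Rightarrow> 'v" where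
  "ns_sub E x y = ns_add E x (ns_smul E (-1) y)"

definition vector_space_on :: "('k::field, 'v) nspace \<Rightarrow> bool" where
  "vector_space_on E \<longleftrightarrow>
     ns_zero E \<in> ns_carrier E \<and>
     (\<forall>x\<in>ns_carrier E. \<forall>y\<in>ns_carrier E. ns_add E x y \<in> ns_carrier E) \<and>
     (\<forall>c. \<forall>x\<in>ns_carrier E. ns_smul E c x \<in> ns_carrier E) \<and>
     (\<forall>x\<in>ns_carrier E. \<forall>y\<in>ns_carrier E. \<forall>z\<in>ns_carrier E.
        ns_add E (ns_add E x y) z = ns_add E x (ns_add E y z)) \<and>
     (\<forall>x\<in>ns_carrier E. \<forall>y\<in>ns_carrier E. ns_add E x y = ns_add E y x) \<and>
     (\<forall>x\<in>ns_carrier E. ns_add E (ns_zero E) x = x) \<and>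
     (\<forall>x\<in>ns_carrier E. ns_add E x (ns_smul E (-1) x) = ns_zero E) \<and>
     (\<forall>x\<in>ns_carrier E. ns_smul E 1 x = x) \<and>
     (\<forall>a b. \<forall>x\<in>ns_carrier E. ns_smul E (a * b) x = ns_smul E a (ns_smul E b x)) \<and>
     (\<forall>a b. \<forall>x\<in>ns_carrier E. ns_smul E (a + b) x = ns_add E (ns_smul E a x) (ns_smul E b x)) \<and>
     (\<forall>a. \<forall>x\<in>ns_carrier E. \<forall>y\<in>ns_carrier E.
        ns_smul E a (ns_add E x y) = ns_add E (ns_smul E a x) (ns_smul E a y))"

definition nonarch_normed_space :: "('k::field \<Rightarrow> real) \<Rightarrow> ('k, 'v) nspace \<Rightarrow> bool" where
  "nonarch_normed_space av E \<longleftrightarrow>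
     vector_space_on E \<and>
     (\<forall>x\<in>ns_carrier E. ns_norm E x \<ge> 0) \<and>
     (\<forall>x\<in>ns_carrier E. ns_norm E x = 0 \<longleftrightarrow> x = ns_zero E) \<and>
     (\<forall>c. \<forall>x\<in>ns_carrier E. ns_norm E (ns_smul E c x) = av c * ns_norm E x) \<and>
     (\<forall>x\<in>ns_carrier E. \<forall>y\<in>ns_carrier E.
        ns_norm E (ns_add E x y) \<le> max (ns_norm E x) (ns_norm E y))"

definition ns_cball :: "('k::field, 'v) nspace \<Rightarrow> 'v \<Rightarrow> real \<Rightarrow> 'v set" where
  "ns_cball E c r = {x \<in> ns_carrier E. ns_norm E (ns_sub E x c) \<le> r}"

definition spherically_complete :: "('k::field, 'v) nspace \<Rightarrow> bool" where
  "spherically_complete E \<longleftrightarrow>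
     (\<forall>c r. (\<forall>n. c n \<in> ns_carrier E \<and> r n \<ge> 0) \<and>
            (\<forall>n. ns_cball E (c (Suc n)) (r (Suc n)) \<subseteq> ns_cball E (c n) (r n))
        \<longrightarrow> (\<Inter>n. ns_cball E (c n) (r n)) \<noteq> {})"

definition linear_subspace_on :: "('k::field, 'v) nspace \<Rightarrow> 'v set \<Rightarrow> bool" where
  "linear_subspace_on E W \<longleftrightarrow> W \<subseteq> ns_carrier E \<and> ns_zero E \<in> W \<and>
     (\<forall>x\<in>W. \<forall>y\<in>W. ns_add E x y \<in> W) \<and> (\<forall>c. \<forall>x\<in>W. ns_smul E c x \<in> W)"

definition closed_in_ns :: "('k::field, 'v) nspace \<Rightarrow> 'v set \<Rightarrow> bool" where
  "closed_in_ns E W \<longleftrightarrow>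
     (\<forall>x\<in>ns_carrier E. (\<forall>e>0. \<exists>w\<in>W. ns_norm E (ns_sub E x w) < e) \<longrightarrow> x \<in> W)"

definition linf :: "('k::field, 'v) nspace \<Rightarrow> ('k, nat \<Rightarrow> 'v) nspace" where
  "linf E = \<lparr> ns_carrier = {f. (\<forall>n. f n \<in> ns_carrier E) \<and> (\<exists>B. \<forall>n. ns_norm E (f n) \<le> B)},
             ns_zero = (\<lambda>n. ns_zero E),
             ns_add = (\<lambda>f g n. ns_add E (f n) (g n)),
             ns_smul = (\<lambda>c f n. ns_smul E c (f n)),
             ns_norm = (\<lambda>f. SUP n. ns_norm E (f n)) \<rparr>"

definition c0 :: "('k::field, 'v) nspace \<Rightarrow> (nat \<Rightarrow> 'v) set" where
  "c0 E = {f \<in> ns_carrier (linf E). (\<lambda>n. ns_norm E (f n)) \<longlonglongrightarrow> 0}"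

definition ns_coset :: "('k::field, 'v) nspace \<Rightarrow> 'v set \<Rightarrow> 'v \<Rightarrow> 'v set" where
  "ns_coset S W f = {ns_add S f w | w. w \<in> W}"

definition ns_rep :: "'v set \<Rightarrow> 'v" where
  "ns_rep C = (SOME f. f \<in> C)"

definition quot :: "('k::field, 'v) nspace \<Rightarrow> 'v set \<Rightarrow> ('k, 'v set) nspace" where
  "quot S W = \<lparr> ns_carrier = ns_coset S W ` ns_carrier S,
               ns_zero = ns_coset S W (ns_zero S),
               ns_add = (\<lambda>C D. ns_coset S W (ns_add S (ns_rep C) (ns_rep D))),
               ns_smul = (\<lambda>c C. ns_coset S W (ns_smul S c (ns_rep C))),
               ns_norm = (\<lambda>C. Inf (ns_norm S ` C)) \<rparr>"

definition diag_map :: "('k::field, 'v) nspace \<Rightarrow> 'v \<Rightarrow> (nat \<Rightarrow> 'v) set" where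
  "diag_map E x = ns_coset (linf E) (c0 E) (\<lambda>n. x)"

definition linear_isometry :: "('k::field, 'v) nspace \<Rightarrow> ('k, 'w) nspace \<Rightarrow> ('v \<Rightarrow> 'w) \<Rightarrow> bool" where
  "linear_isometry E F j \<longleftrightarrow>
     (\<forall>x\<in>ns_carrier E. j x \<in> ns_carrier F) \<and>
     (\<forall>x\<in>ns_carrier E. \<forall>y\<in>ns_carrier E. j (ns_add E x y) = ns_add F (j x) (j y)) \<and>
     (\<forall>c. \<forall>x\<in>ns_carrier E. j (ns_smul E c x) = ns_smul F c (j x)) \<and>
     (\<forall>x\<in>ns_carrier E. ns_norm F (j x) = ns_norm E x)"

end

theory Submission
  imports Defs
begin

(*
  The quotient norm of the class of a bounded sequence f is limsup_k \<parallel>f k\<parallel>, so constant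
  sequences keep their norm and the diagonal map is an isometry.

  For spherical completeness let [f n] be the centres and r n the radii of a decreasing sequence
  of balls.  Nestedness gives limsup_k \<parallel>f m k - f n k\<parallel> \<le> r n for n \<le> m, so from some index
  N n on, f n k lies within r j + 1/(n+1) of f j k for all j \<le> n simultaneously.  Choosing for
  every k the largest n with N n \<le> k yields a diagonal sequence y k = f (idx k) k with
  idx k \<longrightarrow> \<infinity>, hence limsup_k \<parallel>y k - f j k\<parallel> \<le> r j for every j: the class of y lies in all
  the balls.
*)

section \<open>Ultrametric normed spaces\<close>

lemma vector_space_on_image:
  assumes vs: "vector_space_on E"
    and carrier: "ns_carrier F = h ` ns_carrier E"
    and zero: "ns_zero F = h (ns_zero E)"
    and add: "\<And>x y. x \<in> ns_carrier E \<Longrightarrow> y \<in> ns_carrier E \<Longrightarrow>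
                ns_add F (h x) (h y) = h (ns_add E x y)"
    and smul: "\<And>c x. x \<in> ns_carrier E \<Longrightarrow> ns_smul F c (h x) = h (ns_smul E c x)"
  shows "vector_space_on F"
  using vs unfolding vector_space_on_def carrier zero
  by (auto simp: add smul)

locale nonarch_abs =
  fixes av :: "'k::field \<Rightarrow> real"
  assumes abs_field: "nonarch_abs_field av"
begin

lemma av_nonneg: "av c \<ge> 0"
  using abs_field unfolding nonarch_abs_field_def by auto

lemma av_eq_0_iff: "av c = 0 \<longleftrightarrow> c = 0"
  using abs_field unfolding nonarch_abs_field_def by auto

lemma av_mult: "av (a * b) = av a * av b"
  using abs_field unfolding nonarch_abs_field_def by auto

lemma av_0 [simp]: "av 0 = 0"
  by (simp add: av_eq_0_iff)

lemma av_pos: "c \<noteq> 0 \<Longrightarrow> av c > 0"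
  using av_nonneg av_eq_0_iff by (metis less_eq_real_def)

lemma av_1 [simp]: "av 1 = 1"
  using av_mult[of 1 1] av_eq_0_iff[of 1] by simp

lemma av_minus_1 [simp]: "av (-1) = 1"
proof -
  have "av (-1) * av (-1) = 1"
    using av_mult[of "-1" "-1"] by simp
  then show ?thesis
    using av_nonneg[of "-1"] by (metis abs_of_nonneg abs_square_eq_1 power2_eq_square)
qed

lemma av_inverse: "av (inverse c) = inverse (av c)"
proof (cases "c = 0")
  case False
  then have "av c * av (inverse c) = 1"
    by (simp flip: av_mult)
  then show ?thesis
    using av_pos[OF False] by (simp add: field_simps)
qed simp

text \<open>Homogeneity only has to be checked as an inequality: applying it to \<open>inverse c\<close>
  gives the reverse one.\<close>
lemma nonarch_normed_spaceI:
  assumes vs: "vector_space_on F"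
    and nonneg: "\<And>x. x \<in> ns_carrier F \<Longrightarrow> ns_norm F x \<ge> 0"
    and zero: "\<And>x. x \<in> ns_carrier F \<Longrightarrow> ns_norm F x = 0 \<longleftrightarrow> x = ns_zero F"
    and smul_le: "\<And>c x. x \<in> ns_carrier F \<Longrightarrow> ns_norm F (ns_smul F c x) \<le> av c * ns_norm F x"
    and ultra: "\<And>x y. x \<in> ns_carrier F \<Longrightarrow> y \<in> ns_carrier F \<Longrightarrow>
                  ns_norm F (ns_add F x y) \<le> max (ns_norm F x) (ns_norm F y)"
  shows "nonarch_normed_space av F"
proof -
  have "ns_norm F (ns_smul F c x) = av c * ns_norm F x" if x: "x \<in> ns_carrier F" for c x
  proof (cases "c = 0")
    case True
    then show ?thesis
      using smul_le[OF x, of c] nonneg[of "ns_smul F c x"] vs x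
      unfolding vector_space_on_def by force
  next
    case False
    have "ns_smul F (inverse c) (ns_smul F c x) = x"
      using vs x False unfolding vector_space_on_def by (metis left_inverse)
    then have "ns_norm F x \<le> inverse (av c) * ns_norm F (ns_smul F c x)"
      using smul_le[of "ns_smul F c x" "inverse c"] vs x
      unfolding vector_space_on_def by (simp add: av_inverse)
    then have "av c * ns_norm F x \<le> ns_norm F (ns_smul F c x)"
      using av_pos[OF False] by (simp add: field_simps)
    then show ?thesis
      using smul_le[OF x, of c] by simp
  qed
  then show ?thesis
    unfolding nonarch_normed_space_def using assms by auto
qed

end

locale nonarch_nspace = nonarch_abs +
  fixes E :: "('k::field, 'v) nspace"
  assumes normed_space: "nonarch_normed_space av E"
begin

abbreviation "V \<equiv> ns_carrier E"
abbreviation "vzero \<equiv> ns_zero E"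
abbreviation "vadd \<equiv> ns_add E"
abbreviation "vsmul \<equiv> ns_smul E"
abbreviation "vsub \<equiv> ns_sub E"
abbreviation "vnorm \<equiv> ns_norm E"

lemma vector_space: "vector_space_on E"
  using normed_space unfolding nonarch_normed_space_def by auto

lemma vzero_closed [simp]: "vzero \<in> V"
  and vadd_closed [simp]: "x \<in> V \<Longrightarrow> y \<in> V \<Longrightarrow> vadd x y \<in> V"
  and vsmul_closed [simp]: "x \<in> V \<Longrightarrow> vsmul c x \<in> V"
  and vadd_assoc: "x \<in> V \<Longrightarrow> y \<in> V \<Longrightarrow> z \<in> V \<Longrightarrow> vadd (vadd x y) z = vadd x (vadd y z)"
  and vadd_commute: "x \<in> V \<Longrightarrow> y \<in> V \<Longrightarrow> vadd x y = vadd y x"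
  and vzero_vadd [simp]: "x \<in> V \<Longrightarrow> vadd vzero x = x"
  and vadd_vneg [simp]: "x \<in> V \<Longrightarrow> vadd x (vsmul (-1) x) = vzero"
  and vsmul_one [simp]: "x \<in> V \<Longrightarrow> vsmul 1 x = x"
  and vsmul_mult: "x \<in> V \<Longrightarrow> vsmul (a * b) x = vsmul a (vsmul b x)"
  and vsmul_add_left: "x \<in> V \<Longrightarrow> vsmul (a + b) x = vadd (vsmul a x) (vsmul b x)"
  and vsmul_add_right: "x \<in> V \<Longrightarrow> y \<in> V \<Longrightarrow> vsmul a (vadd x y) = vadd (vsmul a x) (vsmul a y)"
  using vector_space unfolding vector_space_on_def by auto

lemma vnorm_nonneg [simp]: "x \<in> V \<Longrightarrow> vnorm x \<ge> 0"
  and vnorm_eq_0_iff: "x \<in> V \<Longrightarrow> vnorm x = 0 \<longleftrightarrow> x = vzero"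
  and vnorm_smul: "x \<in> V \<Longrightarrow> vnorm (vsmul c x) = av c * vnorm x"
  and vnorm_ultra: "x \<in> V \<Longrightarrow> y \<in> V \<Longrightarrow> vnorm (vadd x y) \<le> max (vnorm x) (vnorm y)"
  using normed_space unfolding nonarch_normed_space_def by auto

lemma vnorm_vzero [simp]: "vnorm vzero = 0"
  by (simp add: vnorm_eq_0_iff)

lemma vadd_vzero [simp]: "x \<in> V \<Longrightarrow> vadd x vzero = x"
  using vadd_commute[of x vzero] by simp

lemma vneg_vadd [simp]: "x \<in> V \<Longrightarrow> vadd (vsmul (-1) x) x = vzero"
  using vadd_commute[of x "vsmul (-1) x"] by simp

lemma vadd_left_commute: "x \<in> V \<Longrightarrow> y \<in> V \<Longrightarrow> z \<in> V \<Longrightarrow> vadd x (vadd y z) = vadd y (vadd x z)"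
  by (simp add: vadd_assoc[symmetric] vadd_commute[of x y])

lemma vsub_eq: "vsub x y = vadd x (vsmul (-1) y)"
  by (simp add: ns_sub_def)

lemma vsub_closed [simp]: "x \<in> V \<Longrightarrow> y \<in> V \<Longrightarrow> vsub x y \<in> V"
  by (simp add: vsub_eq)

lemma vsmul_vzero [simp]: "vsmul c vzero = vzero"
  using vnorm_smul[of vzero c] vnorm_eq_0_iff[of "vsmul c vzero"] by simp

lemma vnorm_vneg [simp]: "x \<in> V \<Longrightarrow> vnorm (vsmul (-1) x) = vnorm x"
  by (simp add: vnorm_smul)

lemma vneg_vneg [simp]: "x \<in> V \<Longrightarrow> vsmul (-1) (vsmul (-1) x) = x"
  by (simp flip: vsmul_mult)

lemma vsub_vzero [simp]: "x \<in> V \<Longrightarrow> vsub x vzero = x"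
  by (simp add: vsub_eq)

lemma vsub_self [simp]: "x \<in> V \<Longrightarrow> vsub x x = vzero"
  by (simp add: vsub_eq)

lemma vadd_vsub_cancel [simp]: "x \<in> V \<Longrightarrow> y \<in> V \<Longrightarrow> vadd x (vsub y x) = y"
  by (simp add: vsub_eq vadd_left_commute[of x y])

lemma vsub_vadd_cancel [simp]: "x \<in> V \<Longrightarrow> y \<in> V \<Longrightarrow> vsub (vadd x y) x = y"
  by (simp add: vsub_eq vadd_assoc vadd_left_commute[of x y])

lemma vneg_vsub: "x \<in> V \<Longrightarrow> y \<in> V \<Longrightarrow> vsmul (-1) (vsub x y) = vsub y x"
  by (simp add: vsub_eq vsmul_add_right vadd_commute[of "vsmul (-1) x" y])

lemma vnorm_vsub_commute: "x \<in> V \<Longrightarrow> y \<in> V \<Longrightarrow> vnorm (vsub x y) = vnorm (vsub y x)"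
  using vneg_vsub[of x y] vnorm_vneg[of "vsub x y"] by simp

lemma vsub_vadd_vsub: "x \<in> V \<Longrightarrow> y \<in> V \<Longrightarrow> z \<in> V \<Longrightarrow> vsub x z = vadd (vsub x y) (vsub y z)"
  by (simp add: vsub_eq vadd_assoc flip: vadd_assoc[of "vsmul (-1) y" y "vsmul (-1) z"])

lemma vsub_vadd_distrib: "a \<in> V \<Longrightarrow> b \<in> V \<Longrightarrow> c \<in> V \<Longrightarrow> d \<in> V \<Longrightarrow>
    vsub (vadd a b) (vadd c d) = vadd (vsub a c) (vsub b d)"
  by (simp add: vsub_eq vsmul_add_right vadd_assoc vadd_left_commute[of b "vsmul (-1) c"])

lemma vsmul_vsub: "x \<in> V \<Longrightarrow> y \<in> V \<Longrightarrow> vsmul c (vsub x y) = vsub (vsmul c x) (vsmul c y)"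
  by (simp add: vsub_eq vsmul_add_right flip: vsmul_mult)

lemma vnorm_le_max_vsub: "x \<in> V \<Longrightarrow> y \<in> V \<Longrightarrow> vnorm y \<le> max (vnorm x) (vnorm (vsub x y))"
  using vnorm_ultra[of x "vsub y x"] vnorm_vsub_commute[of x y] by simp

lemma nested_cball_center_mem:
  assumes c: "\<And>n. c n \<in> V" and r: "\<And>n. r n \<ge> 0"
    and nested: "\<And>n. ns_cball E (c (Suc n)) (r (Suc n)) \<subseteq> ns_cball E (c n) (r n)"
    and "n \<le> m"
  shows "c m \<in> ns_cball E (c n) (r n)"
proof -
  have "c m \<in> ns_cball E (c m) (r m)"
    using c r by (simp add: ns_cball_def)
  then show ?thesis
    using lift_Suc_antimono_le[of "\<lambda>n. ns_cball E (c n) (r n)", OF nested \<open>n \<le> m\<close>] by blast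
qed

end

section \<open>Quotients by closed subspaces\<close>

locale nonarch_quotient = nonarch_nspace +
  fixes W
  assumes subspace: "linear_subspace_on E W" and closed: "closed_in_ns E W"
begin

abbreviation "coset \<equiv> ns_coset E W"
abbreviation "Q \<equiv> quot E W"

lemma subspace_subset: "w \<in> W \<Longrightarrow> w \<in> V"
  and subspace_vzero [simp]: "vzero \<in> W"
  and subspace_vadd: "x \<in> W \<Longrightarrow> y \<in> W \<Longrightarrow> vadd x y \<in> W"
  and subspace_vsmul: "x \<in> W \<Longrightarrow> vsmul c x \<in> W"
  using subspace unfolding linear_subspace_on_def by auto

lemma subspace_closedD: "x \<in> V \<Longrightarrow> (\<And>e. e > 0 \<Longrightarrow> \<exists>w\<in>W. vnorm (vsub x w) < e) \<Longrightarrow> x \<in> W"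
  using closed unfolding closed_in_ns_def by blast

lemma mem_coset_iff: "f \<in> V \<Longrightarrow> g \<in> coset f \<longleftrightarrow> g \<in> V \<and> vsub g f \<in> W"
  unfolding ns_coset_def by (auto simp: subspace_subset intro!: exI[of _ "vsub g f"])

lemma coset_self: "f \<in> V \<Longrightarrow> f \<in> coset f"
  by (simp add: mem_coset_iff)

lemma coset_eq_iff:
  assumes "f \<in> V" "g \<in> V"
  shows "coset f = coset g \<longleftrightarrow> vsub f g \<in> W"
proof
  assume "coset f = coset g"
  then show "vsub f g \<in> W"
    using coset_self[OF assms(1)] mem_coset_iff[OF assms(2)] by auto
next
  assume fg: "vsub f g \<in> W"
  then have gf: "vsub g f \<in> W"
    using subspace_vsmul[OF fg, of "-1"] vneg_vsub assms by simp
  have "x \<in> coset g" if "x \<in> coset f" for x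
    using that assms subspace_vadd[OF _ fg] vsub_vadd_vsub[of x f g] by (simp add: mem_coset_iff)
  moreover have "x \<in> coset f" if "x \<in> coset g" for x
    using that assms subspace_vadd[OF _ gf] vsub_vadd_vsub[of x g f] by (simp add: mem_coset_iff)
  ultimately show "coset f = coset g"
    by blast
qed

lemma rep_coset: "f \<in> V \<Longrightarrow> ns_rep (coset f) \<in> V \<and> vsub (ns_rep (coset f)) f \<in> W"
  unfolding ns_rep_def using someI[of "\<lambda>x. x \<in> coset f", OF coset_self] mem_coset_iff by blast

lemma quot_carrier: "ns_carrier Q = coset ` V"
  and quot_zero: "ns_zero Q = coset vzero"
  and quot_norm: "ns_norm Q C = Inf (vnorm ` C)"
  by (simp_all add: quot_def)

lemma quot_add:
  assumes "f \<in> V" "g \<in> V"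
  shows "ns_add Q (coset f) (coset g) = coset (vadd f g)"
proof -
  let ?a = "ns_rep (coset f)" and ?b = "ns_rep (coset g)"
  have "vsub (vadd ?a ?b) (vadd f g) \<in> W"
    using rep_coset[OF assms(1)] rep_coset[OF assms(2)] assms
    by (simp add: vsub_vadd_distrib subspace_vadd)
  then show ?thesis
    using rep_coset assms by (simp add: quot_def coset_eq_iff)
qed

lemma quot_smul:
  assumes "f \<in> V"
  shows "ns_smul Q c (coset f) = coset (vsmul c f)"
proof -
  let ?a = "ns_rep (coset f)"
  have "vsub (vsmul c ?a) (vsmul c f) \<in> W"
    using rep_coset[OF assms] assms by (simp flip: vsmul_vsub add: subspace_vsmul)
  then show ?thesis
    using rep_coset assms by (simp add: quot_def coset_eq_iff)
qed

lemma quot_sub: "f \<in> V \<Longrightarrow> g \<in> V \<Longrightarrow> ns_sub Q (coset f) (coset g) = coset (vsub f g)"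
  by (simp add: ns_sub_def[of Q] quot_smul quot_add vsub_eq)

lemma quot_norm_bdd_below: "bdd_below (vnorm ` coset f)" if "f \<in> V"
  using that by (intro bdd_belowI[of _ 0]) (auto simp: mem_coset_iff)

lemma quot_norm_nonneg: "ns_norm Q (coset f) \<ge> 0" if "f \<in> V"
  unfolding quot_norm
  by (intro cInf_greatest) (use coset_self[OF that] in blast, use that in \<open>auto simp: mem_coset_iff\<close>)

lemma quot_norm_le: "f \<in> V \<Longrightarrow> g \<in> coset f \<Longrightarrow> ns_norm Q (coset f) \<le> vnorm g"
  unfolding quot_norm using quot_norm_bdd_below by (intro cInf_lower) auto

lemma quot_norm_less_iff:
  "f \<in> V \<Longrightarrow> ns_norm Q (coset f) < r \<longleftrightarrow> (\<exists>g\<in>coset f. vnorm g < r)"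
  unfolding quot_norm using quot_norm_bdd_below coset_self
  by (subst cInf_less_iff) auto

lemma quot_norm_eq_0_iff:
  assumes f: "f \<in> V"
  shows "ns_norm Q (coset f) = 0 \<longleftrightarrow> coset f = coset vzero"
proof
  assume norm0: "ns_norm Q (coset f) = 0"
  have "f \<in> W"
    using f
  proof (rule subspace_closedD)
    fix e :: real
    assume "e > 0"
    then obtain g where g: "g \<in> coset f" "vnorm g < e"
      using quot_norm_less_iff[OF f] norm0 by auto
    then have "g \<in> V" "vsub g f \<in> W"
      using f by (auto simp: mem_coset_iff)
    then have "vsub f g \<in> W"
      using f subspace_vsmul[of "vsub g f" "-1"] by (simp add: vneg_vsub)
    moreover have "vsub f (vsub f g) = g"
      using \<open>g \<in> V\<close> f by (simp add: vsub_eq[of f "vsub f g"] vneg_vsub)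
    ultimately show "\<exists>w\<in>W. vnorm (vsub f w) < e"
      using g by metis
  qed
  then show "coset f = coset vzero"
    using f by (simp add: coset_eq_iff)
next
  assume "coset f = coset vzero"
  then show "ns_norm Q (coset f) = 0"
    using quot_norm_le[of vzero vzero] quot_norm_nonneg[of vzero] coset_self[of vzero] by simp
qed

lemma quot_norm_smul_le:
  assumes f: "f \<in> V"
  shows "ns_norm Q (coset (vsmul c f)) \<le> av c * ns_norm Q (coset f)"
proof (cases "c = 0")
  case True
  have "vsmul 0 f = vzero"
    using f vnorm_smul[of f 0] vnorm_eq_0_iff[of "vsmul 0 f"] by simp
  then show ?thesis
    using True quot_norm_eq_0_iff[of vzero] by simp
next
  case False
  have "ns_norm Q (coset (vsmul c f)) / av c \<le> ns_norm Q (coset f)"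
    unfolding quot_norm[of "coset f"]
  proof (rule cInf_greatest)
    show "vnorm ` coset f \<noteq> {}"
      using coset_self f by auto
  next
    fix t
    assume "t \<in> vnorm ` coset f"
    then obtain g where g: "g \<in> coset f" "t = vnorm g"
      by auto
    then have "vsmul c g \<in> coset (vsmul c f)"
      using f by (simp add: mem_coset_iff subspace_vsmul flip: vsmul_vsub)
    then have "ns_norm Q (coset (vsmul c f)) \<le> av c * t"
      using quot_norm_le[of "vsmul c f" "vsmul c g"] f g vnorm_smul[of g c]
      by (simp add: mem_coset_iff)
    then show "ns_norm Q (coset (vsmul c f)) / av c \<le> t"
      using av_pos[OF False] by (simp add: field_simps)
  qed
  then show ?thesis
    using av_pos[OF False] by (simp add: field_simps)
qed

lemma quot_norm_ultra:
  assumes f: "f \<in> V" and g: "g \<in> V"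
  shows "ns_norm Q (coset (vadd f g)) \<le> max (ns_norm Q (coset f)) (ns_norm Q (coset g))"
proof (rule field_le_epsilon)
  fix e :: real
  assume "e > 0"
  obtain x where x: "x \<in> coset f" "vnorm x < ns_norm Q (coset f) + e"
    using quot_norm_less_iff[OF f, of "ns_norm Q (coset f) + e"] \<open>e > 0\<close> by auto
  obtain y where y: "y \<in> coset g" "vnorm y < ns_norm Q (coset g) + e"
    using quot_norm_less_iff[OF g, of "ns_norm Q (coset g) + e"] \<open>e > 0\<close> by auto
  have "x \<in> V" "y \<in> V" "vadd x y \<in> coset (vadd f g)"
    using x y f g by (auto simp: mem_coset_iff vsub_vadd_distrib subspace_vadd)
  then have "ns_norm Q (coset (vadd f g)) \<le> vnorm (vadd x y)"
    using f g by (simp add: quot_norm_le)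
  also have "\<dots> \<le> max (vnorm x) (vnorm y)"
    using \<open>x \<in> V\<close> \<open>y \<in> V\<close> by (rule vnorm_ultra)
  finally show "ns_norm Q (coset (vadd f g)) \<le> max (ns_norm Q (coset f)) (ns_norm Q (coset g)) + e"
    using x y by linarith
qed

lemma nonarch_normed_space_quot: "nonarch_normed_space av Q"
proof (rule nonarch_normed_spaceI)
  show "vector_space_on Q"
    using vector_space quot_carrier quot_zero quot_add quot_smul
    by (rule vector_space_on_image)
  show "ns_norm Q C \<ge> 0" if "C \<in> ns_carrier Q" for C
    using that by (auto simp: quot_carrier quot_norm_nonneg)
  show "ns_norm Q C = 0 \<longleftrightarrow> C = ns_zero Q" if "C \<in> ns_carrier Q" for C
    using that by (auto simp: quot_carrier quot_zero quot_norm_eq_0_iff)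
  show "ns_norm Q (ns_smul Q c C) \<le> av c * ns_norm Q C" if "C \<in> ns_carrier Q" for c C
    using that by (auto simp: quot_carrier quot_smul quot_norm_smul_le)
  show "ns_norm Q (ns_add Q C D) \<le> max (ns_norm Q C) (ns_norm Q D)"
    if "C \<in> ns_carrier Q" "D \<in> ns_carrier Q" for C D
    using that by (auto simp: quot_carrier quot_add quot_norm_ultra)
qed

end

section \<open>Bounded and null sequences\<close>

context nonarch_nspace
begin

abbreviation "L \<equiv> linf E"

lemma linf_carrier_iff: "f \<in> ns_carrier L \<longleftrightarrow> (\<forall>n. f n \<in> V) \<and> (\<exists>B. \<forall>n. vnorm (f n) \<le> B)"
  and linf_zero: "ns_zero L = (\<lambda>n. vzero)"
  and linf_add: "ns_add L f g = (\<lambda>n. vadd (f n) (g n))"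
  and linf_smul: "ns_smul L c f = (\<lambda>n. vsmul c (f n))"
  and linf_norm: "ns_norm L f = (SUP n. vnorm (f n))"
  and linf_sub: "ns_sub L f g = (\<lambda>n. vsub (f n) (g n))"
  by (simp_all add: linf_def ns_sub_def)

lemma linf_memD: "f \<in> ns_carrier L \<Longrightarrow> f n \<in> V"
  by (simp add: linf_carrier_iff)

lemma vnorm_le_linf_norm: "f \<in> ns_carrier L \<Longrightarrow> vnorm (f n) \<le> ns_norm L f"
  unfolding linf_norm linf_carrier_iff by (intro cSUP_upper) (auto intro: bdd_aboveI2)

lemma linf_norm_le: "(\<And>n. vnorm (f n) \<le> B) \<Longrightarrow> ns_norm L f \<le> B"
  unfolding linf_norm by (intro cSUP_least) auto

lemma linf_const: "x \<in> V \<Longrightarrow> (\<lambda>n. x) \<in> ns_carrier L"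
  by (auto simp: linf_carrier_iff)

lemma linf_vadd_closed:
  assumes f: "f \<in> ns_carrier L" and g: "g \<in> ns_carrier L"
  shows "(\<lambda>n. vadd (f n) (g n)) \<in> ns_carrier L"
proof -
  obtain A B where A: "\<And>n. vnorm (f n) \<le> A" and B: "\<And>n. vnorm (g n) \<le> B"
    using assms unfolding linf_carrier_iff by blast
  have "vnorm (vadd (f n) (g n)) \<le> max A B" for n
    using order_trans[OF vnorm_ultra[OF linf_memD[OF f] linf_memD[OF g]] max.mono[OF A B]] .
  then show ?thesis
    using f g unfolding linf_carrier_iff by auto
qed

lemma linf_vsmul_closed:
  assumes f: "f \<in> ns_carrier L"
  shows "(\<lambda>n. vsmul c (f n)) \<in> ns_carrier L"
proof -
  obtain B where B: "\<And>n. vnorm (f n) \<le> B"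
    using assms unfolding linf_carrier_iff by blast
  have "vnorm (vsmul c (f n)) \<le> av c * B" for n
    using mult_left_mono[OF B av_nonneg] by (simp add: vnorm_smul linf_memD[OF f])
  then show ?thesis
    using f unfolding linf_carrier_iff by auto
qed

lemma linf_vsub_closed:
  "f \<in> ns_carrier L \<Longrightarrow> g \<in> ns_carrier L \<Longrightarrow> (\<lambda>n. vsub (f n) (g n)) \<in> ns_carrier L"
  using linf_vadd_closed[of f "\<lambda>n. vsmul (-1) (g n)"] linf_vsmul_closed[of g "-1"]
  by (simp add: vsub_eq)

lemma vector_space_linf: "vector_space_on L"
  unfolding vector_space_on_def linf_zero linf_add linf_smul
proof (intro conjI ballI allI)
  fix f g h a b
  assume f: "f \<in> ns_carrier L" and g: "g \<in> ns_carrier L" and h: "h \<in> ns_carrier L"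
  show "(\<lambda>n. vadd (f n) (g n)) \<in> ns_carrier L" "(\<lambda>n. vsmul a (f n)) \<in> ns_carrier L"
    using f g by (auto intro: linf_vadd_closed linf_vsmul_closed)
  show "(\<lambda>n. vadd (vadd (f n) (g n)) (h n)) = (\<lambda>n. vadd (f n) (vadd (g n) (h n)))"
    using f g h by (simp add: linf_memD vadd_assoc)
  show "(\<lambda>n. vadd (f n) (g n)) = (\<lambda>n. vadd (g n) (f n))"
    using f g by (simp add: linf_memD vadd_commute)
  show "(\<lambda>n. vadd vzero (f n)) = f" "(\<lambda>n. vadd (f n) (vsmul (-1) (f n))) = (\<lambda>n. vzero)"
    "(\<lambda>n. vsmul 1 (f n)) = f"
    using f by (simp_all add: linf_memD)
  show "(\<lambda>n. vsmul (a * b) (f n)) = (\<lambda>n. vsmul a (vsmul b (f n)))"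
    "(\<lambda>n. vsmul (a + b) (f n)) = (\<lambda>n. vadd (vsmul a (f n)) (vsmul b (f n)))"
    "(\<lambda>n. vsmul a (vadd (f n) (g n))) = (\<lambda>n. vadd (vsmul a (f n)) (vsmul a (g n)))"
    using f g by (simp_all add: linf_memD vsmul_mult vsmul_add_left vsmul_add_right)
qed (rule linf_const[OF vzero_closed])

lemma nonarch_normed_space_linf: "nonarch_normed_space av L"
proof (rule nonarch_normed_spaceI)
  fix f g c
  assume f: "f \<in> ns_carrier L" and g: "g \<in> ns_carrier L"
  show "ns_norm L f \<ge> 0"
    using vnorm_le_linf_norm[OF f, of 0] vnorm_nonneg[OF linf_memD[OF f, of 0]] by linarith
  show "ns_norm L f = 0 \<longleftrightarrow> f = ns_zero L"
  proof
    assume "ns_norm L f = 0"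
    then have "vnorm (f n) = 0" for n
      using vnorm_le_linf_norm[OF f, of n] vnorm_nonneg[OF linf_memD[OF f]] by (simp add: order_antisym)
    then show "f = ns_zero L"
      using f by (auto simp: linf_zero linf_memD vnorm_eq_0_iff)
  qed (simp add: linf_zero linf_norm)
  show "ns_norm L (ns_smul L c f) \<le> av c * ns_norm L f"
    unfolding linf_smul
    using vnorm_le_linf_norm[OF f] av_nonneg
    by (intro linf_norm_le) (simp add: vnorm_smul linf_memD[OF f] mult_left_mono)
  show "ns_norm L (ns_add L f g) \<le> max (ns_norm L f) (ns_norm L g)"
    unfolding linf_add
    using vnorm_ultra linf_memD[OF f] linf_memD[OF g] vnorm_le_linf_norm[OF f] vnorm_le_linf_norm[OF g]
    by (intro linf_norm_le) (meson max.mono order_trans)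
qed (rule vector_space_linf)

lemma c0_iff: "f \<in> c0 E \<longleftrightarrow> f \<in> ns_carrier L \<and> (\<lambda>n. vnorm (f n)) \<longlonglongrightarrow> 0"
  by (simp add: c0_def)

lemma linear_subspace_c0: "linear_subspace_on L (c0 E)"
  unfolding linear_subspace_on_def linf_zero linf_add linf_smul
proof (intro conjI ballI allI)
  show "c0 E \<subseteq> ns_carrier L" "(\<lambda>n. vzero) \<in> c0 E"
    by (auto simp: c0_iff linf_const)
next
  fix f g
  assume f: "f \<in> c0 E" and g: "g \<in> c0 E"
  then have fL: "f \<in> ns_carrier L" and gL: "g \<in> ns_carrier L"
    by (simp_all add: c0_iff)
  have "(\<lambda>n. max (vnorm (f n)) (vnorm (g n))) \<longlonglongrightarrow> max 0 0"
    using f g unfolding c0_iff by (intro tendsto_max) auto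
  moreover have "\<forall>\<^sub>F n in sequentially. 0 \<le> vnorm (vadd (f n) (g n))"
    and "\<forall>\<^sub>F n in sequentially. vnorm (vadd (f n) (g n)) \<le> max (vnorm (f n)) (vnorm (g n))"
    using linf_memD[OF fL] linf_memD[OF gL] by (simp_all add: vnorm_ultra)
  ultimately have "(\<lambda>n. vnorm (vadd (f n) (g n))) \<longlonglongrightarrow> 0"
    using tendsto_sandwich[OF _ _ tendsto_const] by auto
  then show "(\<lambda>n. vadd (f n) (g n)) \<in> c0 E"
    using fL gL by (simp add: c0_iff linf_vadd_closed)
next
  fix c f
  assume f: "f \<in> c0 E"
  then have fL: "f \<in> ns_carrier L"
    by (simp add: c0_iff)
  have "(\<lambda>n. av c * vnorm (f n)) \<longlonglongrightarrow> av c * 0"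
    using f by (intro tendsto_mult tendsto_const) (simp add: c0_iff)
  then show "(\<lambda>n. vsmul c (f n)) \<in> c0 E"
    using fL by (simp add: c0_iff linf_vsmul_closed vnorm_smul linf_memD)
qed

lemma closed_c0: "closed_in_ns L (c0 E)"
  unfolding closed_in_ns_def
proof (intro ballI impI)
  fix f
  assume f: "f \<in> ns_carrier L"
    and approx: "\<forall>e>0. \<exists>g\<in>c0 E. ns_norm L (ns_sub L f g) < e"
  have "\<forall>\<^sub>F n in sequentially. vnorm (f n) < e" if "e > 0" for e
  proof -
    obtain g where g: "g \<in> c0 E" "ns_norm L (ns_sub L f g) < e"
      using approx \<open>e > 0\<close> by blast
    then have gL: "g \<in> ns_carrier L"
      by (simp add: c0_iff)
    have "vnorm (f n) < e" if "vnorm (g n) < e" for n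
    proof -
      have "vnorm (vsub (f n) (g n)) < e"
        using vnorm_le_linf_norm[OF linf_vsub_closed[OF f gL], of n] g(2) by (simp add: linf_sub)
      moreover have "vnorm (f n) \<le> max (vnorm (g n)) (vnorm (vsub (g n) (f n)))"
        using linf_memD[OF gL, of n] linf_memD[OF f, of n] by (rule vnorm_le_max_vsub)
      ultimately show ?thesis
        using that vnorm_vsub_commute[OF linf_memD[OF gL, of n] linf_memD[OF f, of n]]
        by (simp add: max_def split: if_splits)
    qed
    moreover have "\<forall>\<^sub>F n in sequentially. vnorm (g n) < e"
      using g(1) \<open>e > 0\<close> unfolding c0_iff by (auto intro: order_tendstoD(2))
    ultimately show ?thesis
      by (auto elim: eventually_mono)
  qed
  moreover have "\<forall>\<^sub>F n in sequentially. a < vnorm (f n)" if "a < 0" for a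
    using that f by (simp add: linf_memD less_le_trans)
  ultimately have "(\<lambda>n. vnorm (f n)) \<longlonglongrightarrow> 0"
    by (intro order_tendstoI)
  then show "f \<in> c0 E"
    using f by (simp add: c0_iff)
qed

end

section \<open>The space of bounded sequences modulo null sequences\<close>

lemma diagonal_index_exists:
  fixes P :: "nat \<Rightarrow> nat \<Rightarrow> bool"
  assumes eventually: "\<And>n. \<forall>\<^sub>F k in sequentially. P n k" and P0: "\<And>k. P 0 k"
  obtains idx where "\<And>k. P (idx k) k" and "\<And>J. \<forall>\<^sub>F k in sequentially. J \<le> idx k"
proof -
  obtain N where N: "\<And>n k. N n \<le> k \<Longrightarrow> P n k"
    using eventually unfolding eventually_sequentially by metis
  define S where "S k = {n. n \<le> k \<and> (n = 0 \<or> N n \<le> k)}" for k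
  define idx where "idx k = Max (S k)" for k
  have finite: "finite (S k)" and zero: "0 \<in> S k" for k
    by (auto simp: S_def)
  have "P (idx k) k" for k
  proof -
    have "idx k \<in> S k"
      unfolding idx_def using finite zero by (intro Max_in) auto
    then have "idx k = 0 \<or> N (idx k) \<le> k"
      by (simp add: S_def)
    then show ?thesis
      using P0 N by auto
  qed
  moreover have "\<forall>\<^sub>F k in sequentially. J \<le> idx k" for J
    unfolding eventually_sequentially idx_def
    by (intro exI[of _ "max J (N J)"] allI impI Max_ge finite) (simp add: S_def)
  ultimately show ?thesis
    using that by blast
qed

context nonarch_nspace
begin

definition limsup_dist_le :: "(nat \<Rightarrow> 'v) \<Rightarrow> (nat \<Rightarrow> 'v) \<Rightarrow> real \<Rightarrow> bool" where
  "limsup_dist_le f g r \<longleftrightarrow> (\<forall>e>0. \<forall>\<^sub>F k in sequentially. vnorm (vsub (f k) (g k)) \<le> r + e)"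

lemma limsup_dist_le_diagonal:
  fixes idx :: "nat \<Rightarrow> nat"
  assumes close: "\<And>j k. j \<le> idx k \<Longrightarrow> vnorm (vsub (y k) (f j k)) \<le> r j + 1 / (real (idx k) + 1)"
    and idx_large: "\<And>J. \<forall>\<^sub>F k in sequentially. J \<le> idx k"
  shows "limsup_dist_le y (f j) (r j)"
  unfolding limsup_dist_le_def
proof (intro allI impI)
  fix e :: real
  assume "e > 0"
  then obtain n0 where n0: "1 / (real n0 + 1) < e"
    using reals_Archimedean[of e] by (auto simp: inverse_eq_divide add.commute)
  show "\<forall>\<^sub>F k in sequentially. vnorm (vsub (y k) (f j k)) \<le> r j + e"
    using idx_large[of "max j n0"]
  proof (rule eventually_mono)
    fix k
    assume "max j n0 \<le> idx k"
    then have "1 / (real (idx k) + 1) \<le> 1 / (real n0 + 1)"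
      by (simp add: frac_le)
    then show "vnorm (vsub (y k) (f j k)) \<le> r j + e"
      using close[of j k] \<open>max j n0 \<le> idx k\<close> n0 by linarith
  qed
qed

lemma linf_diagonal_center:
  fixes f :: "nat \<Rightarrow> nat \<Rightarrow> 'v" and r :: "nat \<Rightarrow> real"
  assumes f: "\<And>n. f n \<in> ns_carrier L" and r: "\<And>n. r n \<ge> 0"
    and close: "\<And>n m. n \<le> m \<Longrightarrow> limsup_dist_le (f m) (f n) (r n)"
  obtains y where "y \<in> ns_carrier L" and "\<And>j. limsup_dist_le y (f j) (r j)"
proof -
  have fV: "f n k \<in> V" for n k
    using f by (rule linf_memD)
  define P where "P n k \<longleftrightarrow> (\<forall>j\<in>{..n}. vnorm (vsub (f n k) (f j k)) \<le> r j + 1 / (real n + 1))" for n k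
  have "\<forall>\<^sub>F k in sequentially. P n k" for n
    unfolding P_def using close unfolding limsup_dist_le_def by (intro eventually_ball_finite) auto
  moreover have "P 0 k" for k
    using r[of 0] fV by (simp add: P_def)
  ultimately obtain idx where P: "\<And>k. P (idx k) k"
    and idx_large: "\<And>J. \<forall>\<^sub>F k in sequentially. J \<le> idx k"
    by (rule diagonal_index_exists) auto
  define y where "y k = f (idx k) k" for k
  have yV: "y k \<in> V" for k
    by (simp add: y_def fV)
  have y_close: "vnorm (vsub (y k) (f j k)) \<le> r j + 1 / (real (idx k) + 1)" if "j \<le> idx k" for j k
    using P[of k] that by (simp add: P_def y_def)
  obtain B where B: "\<And>k. vnorm (f 0 k) \<le> B"
    using f[of 0] by (auto simp: linf_carrier_iff)
  have "vnorm (y k) \<le> max B (r 0 + 1)" for k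
  proof -
    have "vnorm (vsub (y k) (f 0 k)) \<le> r 0 + 1"
      using y_close[of 0 k] by (simp add: order_trans[OF _ add_left_mono])
    then have "vnorm (vsub (f 0 k) (y k)) \<le> r 0 + 1"
      using vnorm_vsub_commute[OF yV[of k] fV[of 0 k]] by simp
    then show ?thesis
      using vnorm_le_max_vsub[OF fV[of 0 k] yV[of k]] B[of k] by (simp add: max_def split: if_splits)
  qed
  then have "y \<in> ns_carrier L"
    using yV by (auto simp: linf_carrier_iff)
  moreover have "limsup_dist_le y (f j) (r j)" for j
    using y_close idx_large by (rule limsup_dist_le_diagonal)
  ultimately show ?thesis
    using that by blast
qed

abbreviation "Lc0 \<equiv> quot L (c0 E)"
abbreviation "cls \<equiv> ns_coset L (c0 E)"

lemma nonarch_quotient_linf_c0: "nonarch_quotient av L (c0 E)"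
  by unfold_locales (fact abs_field nonarch_normed_space_linf linear_subspace_c0 closed_c0)+

lemma quot_c0_norm_le_eventually:
  assumes f: "f \<in> ns_carrier L" and le: "ns_norm Lc0 (cls f) \<le> r" and "e > 0"
  shows "\<forall>\<^sub>F k in sequentially. vnorm (f k) \<le> r + e"
proof -
  interpret Q: nonarch_quotient av L "c0 E"
    by (rule nonarch_quotient_linf_c0)
  obtain g where g: "g \<in> cls f" "ns_norm L g < r + e"
    using Q.quot_norm_less_iff[OF f, of "r + e"] le \<open>e > 0\<close> by auto
  then have gL: "g \<in> ns_carrier L" and "(\<lambda>k. vnorm (vsub (g k) (f k))) \<longlonglongrightarrow> 0"
    using f by (auto simp: Q.mem_coset_iff c0_iff linf_sub)
  moreover have "0 < r + e"
    using Q.quot_norm_nonneg[OF f] le \<open>e > 0\<close> by linarith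
  ultimately have "\<forall>\<^sub>F k in sequentially. vnorm (vsub (g k) (f k)) < r + e"
    by (auto intro: order_tendstoD(2))
  then show ?thesis
  proof (rule eventually_mono)
    fix k
    assume "vnorm (vsub (g k) (f k)) < r + e"
    moreover have "vnorm (g k) < r + e"
      using vnorm_le_linf_norm[OF gL, of k] g(2) by linarith
    ultimately show "vnorm (f k) \<le> r + e"
      using vnorm_le_max_vsub[OF linf_memD[OF gL, of k] linf_memD[OF f, of k]] by simp
  qed
qed

lemma quot_c0_norm_le_tail_bound:
  assumes f: "f \<in> ns_carrier L" and tail: "\<And>k. N \<le> k \<Longrightarrow> vnorm (f k) \<le> b"
  shows "ns_norm Lc0 (cls f) \<le> b"
proof -
  interpret Q: nonarch_quotient av L "c0 E"
    by (rule nonarch_quotient_linf_c0)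
  define g where "g k = (if k < N then vzero else f k)" for k
  have "0 \<le> b"
    using tail[of N] vnorm_nonneg[OF linf_memD[OF f, of N]] by linarith
  then have g_le: "vnorm (g k) \<le> b" for k
    using tail by (simp add: g_def)
  moreover have "g k \<in> V" for k
    using f by (simp add: g_def linf_memD)
  ultimately have gL: "g \<in> ns_carrier L"
    unfolding linf_carrier_iff by blast
  have "\<forall>\<^sub>F k in sequentially. vnorm (vsub (g k) (f k)) = 0"
    unfolding eventually_sequentially by (intro exI[of _ N]) (simp add: g_def linf_memD[OF f])
  then have "(\<lambda>k. vnorm (vsub (g k) (f k))) \<longlonglongrightarrow> 0"
    by (rule tendsto_eventually)
  then have "g \<in> cls f"
    using f gL linf_vsub_closed[OF gL f] by (simp add: Q.mem_coset_iff c0_iff linf_sub)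
  with f have "ns_norm Lc0 (cls f) \<le> ns_norm L g"
    by (rule Q.quot_norm_le)
  also have "\<dots> \<le> b"
    using g_le by (rule linf_norm_le)
  finally show ?thesis .
qed

lemma quot_c0_norm_le_iff:
  assumes f: "f \<in> ns_carrier L"
  shows "ns_norm Lc0 (cls f) \<le> r \<longleftrightarrow> (\<forall>e>0. \<forall>\<^sub>F k in sequentially. vnorm (f k) \<le> r + e)"
proof (intro iffI allI impI)
  assume bound: "\<forall>e>0. \<forall>\<^sub>F k in sequentially. vnorm (f k) \<le> r + e"
  show "ns_norm Lc0 (cls f) \<le> r"
  proof (rule field_le_epsilon)
    fix e :: real
    assume "e > 0"
    then obtain N where "\<And>k. N \<le> k \<Longrightarrow> vnorm (f k) \<le> r + e"
      using bound unfolding eventually_sequentially by blast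
    with f show "ns_norm Lc0 (cls f) \<le> r + e"
      by (rule quot_c0_norm_le_tail_bound)
  qed
qed (use f quot_c0_norm_le_eventually in blast)

lemma quot_c0_cball_iff:
  assumes f: "f \<in> ns_carrier L" and g: "g \<in> ns_carrier L"
  shows "cls f \<in> ns_cball Lc0 (cls g) r \<longleftrightarrow> limsup_dist_le f g r"
proof -
  interpret Q: nonarch_quotient av L "c0 E"
    by (rule nonarch_quotient_linf_c0)
  show ?thesis
    using f g quot_c0_norm_le_iff[OF linf_vsub_closed[OF f g]]
    by (simp add: ns_cball_def Q.quot_carrier Q.quot_sub linf_sub limsup_dist_le_def)
qed

lemma quot_c0_norm_const:
  assumes x: "x \<in> V"
  shows "ns_norm Lc0 (cls (\<lambda>k. x)) = vnorm x"
proof (rule antisym)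
  show "ns_norm Lc0 (cls (\<lambda>k. x)) \<le> vnorm x"
    using linf_const[OF x] by (rule quot_c0_norm_le_tail_bound) simp
  show "vnorm x \<le> ns_norm Lc0 (cls (\<lambda>k. x))"
  proof (rule field_le_epsilon)
    fix e :: real
    assume "e > 0"
    with linf_const[OF x] order_refl
    have "\<forall>\<^sub>F k in sequentially. vnorm x \<le> ns_norm Lc0 (cls (\<lambda>k. x)) + e"
      by (rule quot_c0_norm_le_eventually)
    then show "vnorm x \<le> ns_norm Lc0 (cls (\<lambda>k. x)) + e"
      by simp
  qed
qed

lemma linear_isometry_diag_map: "linear_isometry E Lc0 (diag_map E)"
proof -
  interpret Q: nonarch_quotient av L "c0 E"
    by (rule nonarch_quotient_linf_c0)
  show ?thesis
    unfolding linear_isometry_def diag_map_def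
  proof (intro conjI ballI allI)
    fix x y c
    assume x: "x \<in> V" and y: "y \<in> V"
    show "cls (\<lambda>k. x) \<in> ns_carrier Lc0"
      using x by (simp add: Q.quot_carrier linf_const)
    show "cls (\<lambda>k. vadd x y) = ns_add Lc0 (cls (\<lambda>k. x)) (cls (\<lambda>k. y))"
      using Q.quot_add[OF linf_const[OF x] linf_const[OF y]] by (simp add: linf_add)
    show "cls (\<lambda>k. vsmul c x) = ns_smul Lc0 c (cls (\<lambda>k. x))"
      using Q.quot_smul[OF linf_const[OF x]] by (simp add: linf_smul)
    show "ns_norm Lc0 (cls (\<lambda>k. x)) = vnorm x"
      using x by (rule quot_c0_norm_const)
  qed
qed

lemma spherically_complete_quot_c0: "spherically_complete Lc0"
  unfolding spherically_complete_def
proof (intro allI impI, elim conjE)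
  interpret Q: nonarch_quotient av L "c0 E"
    by (rule nonarch_quotient_linf_c0)
  interpret Lc0: nonarch_nspace av Lc0
    by unfold_locales (rule Q.nonarch_normed_space_quot)
  fix c r
  assume centers: "\<forall>n. c n \<in> ns_carrier Lc0 \<and> r n \<ge> 0"
    and nested: "\<forall>n. ns_cball Lc0 (c (Suc n)) (r (Suc n)) \<subseteq> ns_cball Lc0 (c n) (r n)"
  then have "\<forall>n. \<exists>g. g \<in> ns_carrier L \<and> c n = cls g"
    unfolding Q.quot_carrier by blast
  then obtain f where f: "\<And>n. f n \<in> ns_carrier L" and c: "\<And>n. c n = cls (f n)"
    by metis
  have r: "\<And>n. r n \<ge> 0"
    using centers by blast
  have "c m \<in> ns_cball Lc0 (c n) (r n)" if "n \<le> m" for n m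
    using centers nested that by (intro Lc0.nested_cball_center_mem) auto
  then have close: "limsup_dist_le (f m) (f n) (r n)" if "n \<le> m" for n m
    using that by (simp add: c quot_c0_cball_iff[OF f f])
  obtain y where y: "y \<in> ns_carrier L" "\<And>j. limsup_dist_le y (f j) (r j)"
    using linf_diagonal_center[of f r, OF f r close] by blast
  then have "cls y \<in> ns_cball Lc0 (c n) (r n)" for n
    by (simp add: c quot_c0_cball_iff[OF y(1) f])
  then show "(\<Inter>n. ns_cball Lc0 (c n) (r n)) \<noteq> {}"
    by blast
qed

end

theorem proposition6p1:
  fixes av :: "'k::field \<Rightarrow> real" and E :: "('k, 'v) nspace"
  assumes "nonarch_abs_field av"
    and "nonarch_normed_space av E"
  shows "nonarch_normed_space av (linf E)
       \<and> linear_subspace_on (linf E) (c0 E)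
       \<and> closed_in_ns (linf E) (c0 E)
       \<and> nonarch_normed_space av (quot (linf E) (c0 E))
       \<and> spherically_complete (quot (linf E) (c0 E))
       \<and> linear_isometry E (quot (linf E) (c0 E)) (diag_map E)
       \<and> (\<exists>(F :: ('k, (nat \<Rightarrow> 'v) set) nspace) j.
            nonarch_normed_space av F \<and> spherically_complete F \<and> linear_isometry E F j)"
proof -
  interpret nonarch_nspace av E
    using assms by unfold_locales
  interpret Q: nonarch_quotient av "linf E" "c0 E"
    by (rule nonarch_quotient_linf_c0)
  show ?thesis
    using nonarch_normed_space_linf linear_subspace_c0 closed_c0 Q.nonarch_normed_space_quot
      spherically_complete_quot_c0 linear_isometry_diag_map
    by blast
qed

end
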